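(* A set $\mathcal{K}\subseteq\wp(\mathcal{G})$ is coherent if and only if there is a proper filter $\mathfrak{D}$ on the set $\mathbf{C}$ of all coherent sets of desirable gambles — i.e. $\mathfrak{D}\subseteq\wp(\mathbf{C})$ with $\mathfrak{D}\neq\emptyset$, $\emptyset\notin\mathfrak{D}$, $\mathbb{D}_1\cap\mathbb{D}_2\in\mathfrak{D}$ whenever $\mathbb{D}_1,\mathbb{D}_2\in\mathfrak{D}$, and $\mathbb{D}_2\in\mathfrak{D}$ whenever $\mathbb{D}_1\in\mathfrak{D}$ and $\mathbb{D}_1\subseteq\mathbb{D}_2\subseteq\mathbf{C}$ — such that for all $B\subseteq\mathcal{G}$: $B\in\mathcal{K}$ iff there is $\mathbb{D}\in\mathfrak{D}$ with $B\cap D\neq\emptyset$ for all $D\in\mathbb{D}$. Moreover, for such a filter, the latter condition is equivalent to $\{D\in\mathbf{C}: B\cap D\neq\emptyset\}\in\mathfrak{D}$.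
   Context: $\Omega$ is a non-empty set and $\mathcal{G}$ is the set of bounded functions $\Omega\to\mathbb{R}$. $f\geq g$ means pointwise $\geq$; $f\gneq g$ means $f\geq g$ and $f\neq g$; $\mathcal{G}_{\gneq 0}=\{f: f\gneq 0\}$. $\mathrm{posi}(B)=\{\sum_{i=1}^m\lambda_i h_i: m\geq1,\lambda_i>0,h_i\in B\}$. A set $D\subseteq\mathcal{G}$ is coherent if $0\notin D$; $\mathcal{G}_{\gneq0}\subseteq D$; $\lambda g\in D$ whenever $g\in D,\lambda>0$; and $f+g\in D$ whenever $f,g\in D$. A set $\mathcal{K}\subseteq\wp(\mathcal{G})$ is coherent if: (K$_\emptyset$) $\emptyset\notin\mathcal{K}$; (K$_0$) if $A\in\mathcal{K}$ then $A\setminus\{0\}\in\mathcal{K}$; (K$_{\gneq0}$) if $g\in\mathcal{G}_{\gneq0}$ then $\{g\}\in\mathcal{K}$; (K$_\supseteq$) if $A\in\mathcal{K}$ and $B\supseteq A$ then $B\in\mathcal{K}$; (K$_{\mathrm{Dom}}$) if $A\in\mathcal{K}$ and for each $g\in A$, $f_g$ is a gamble with $f_g\geq g$, then $\{f_g: g\in A\}\in\mathcal{K}$; (K$_{\mathrm{Add}}$) if $A_1,\ldots,A_n\in\mathcal{K}$ (finitely many) and for each $\langle g_1,\ldots,g_n\rangle\in A_1\times\cdots\times A_n$, $f_{\langle g_1,\ldots,g_n\rangle}$ is some member of $\mathrm{posi}(\{g_1,\ldots,g_n\})$, then $\{f_{\langle g_1,\ldots,g_n\rangle}:\langle g_1,\ldots,g_n\rangle\in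 A_1\times\cdots\times A_n\}\in\mathcal{K}$. *)

theory Defs
  imports Complex_Main "HOL-Library.FuncSet"
begin

text \<open>Gambles on \<Omega> (represented by the type 'a; HOL types are nonempty):
  bounded real-valued functions.\<close>
definition gambles :: "('a \<Rightarrow> real) set" where
  "gambles = {f. \<exists>c. \<forall>x. \<bar>f x\<bar> \<le> c}"

definition pos_gambles :: "('a \<Rightarrow> real) set" where
  "pos_gambles = {f \<in> gambles. (\<forall>x. f x \<ge> 0) \<and> f \<noteq> (\<lambda>x. 0)}"

definition posi :: "('a \<Rightarrow> real) set \<Rightarrow> ('a \<Rightarrow> real) set" where
  "posi B = {g. \<exists>m::nat. m \<ge> 1 \<and> (\<exists>l h. (\<forall>i<m. l i > (0::real) \<and> h i \<in> B)
                 \<and> g = (\<lambda>x. \<Sum>i<m. l i * h i x))}"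

definition coherent_D :: "('a \<Rightarrow> real) set \<Rightarrow> bool" where
  "coherent_D D \<longleftrightarrow> D \<subseteq> gambles \<and> (\<lambda>x. 0) \<notin> D \<and> pos_gambles \<subseteq> D
     \<and> (\<forall>g\<in>D. \<forall>c::real. c > 0 \<longrightarrow> (\<lambda>x. c * g x) \<in> D)
     \<and> (\<forall>f\<in>D. \<forall>g\<in>D. (\<lambda>x. f x + g x) \<in> D)"

definition coherent_sets :: "('a \<Rightarrow> real) set set" where
  "coherent_sets = {D. coherent_D D}"

definition coherent_K :: "('a \<Rightarrow> real) set set \<Rightarrow> bool" where
  "coherent_K K \<longleftrightarrow>
     {} \<notin> K
   \<and> (\<forall>A\<in>K. A - {\<lambda>x. 0} \<in> K)
   \<and> (\<forall>g\<in>pos_gambles. {g} \<in> K)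
   \<and> (\<forall>A\<in>K. \<forall>B. A \<subseteq> B \<and> B \<subseteq> gambles \<longrightarrow> B \<in> K)
   \<and> (\<forall>A\<in>K. \<forall>f. (\<forall>g\<in>A. f g \<in> gambles \<and> (\<forall>x. f g x \<ge> g x)) \<longrightarrow> f ` A \<in> K)
   \<and> (\<forall>(n::nat) (A::nat \<Rightarrow> ('a \<Rightarrow> real) set) f.
        (\<forall>i<n. A i \<in> K) \<and> (\<forall>g\<in>PiE {..<n} A. f g \<in> posi (g ` {..<n}))
        \<longrightarrow> f ` (PiE {..<n} A) \<in> K)"

definition proper_filter_on :: "'b set set \<Rightarrow> 'b set \<Rightarrow> bool" where
  "proper_filter_on F C \<longleftrightarrow> F \<subseteq> Pow C \<and> F \<noteq> {} \<and> {} \<notin> F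
     \<and> (\<forall>D1\<in>F. \<forall>D2\<in>F. D1 \<inter> D2 \<in> F)
     \<and> (\<forall>D1\<in>F. \<forall>D2. D1 \<subseteq> D2 \<and> D2 \<subseteq> C \<longrightarrow> D2 \<in> F)"

definition represents :: "('a \<Rightarrow> real) set set \<Rightarrow> ('a \<Rightarrow> real) set set set \<Rightarrow> bool" where
  "represents K F \<longleftrightarrow> (\<forall>B. B \<subseteq> gambles \<longrightarrow>
      (B \<in> K \<longleftrightarrow> (\<exists>DD\<in>F. \<forall>D\<in>DD. B \<inter> D \<noteq> {})))"

end

theory Submission
  imports Defs
begin

text \<open>
  If K is coherent, the sets \<open>{D \<in> C. A \<inter> D \<noteq> {}}\<close> with \<open>A \<in> K\<close> generate a proper filter
  representing K. The crux is that K is closed under coherent consequence: if every coherent D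
  meeting \<open>A\<^sub>1, \<dots>, A\<^sub>n \<in> K\<close> also meets B, then \<open>B \<in> K\<close>. Indeed, for each choice of
  \<open>g\<^sub>i \<in> A\<^sub>i\<close>, either \<open>posi {g\<^sub>i}\<close> contains a gamble \<open>\<le> 0\<close>, or the natural extension of
  \<open>{g\<^sub>i}\<close> is coherent, hence meets B, which yields an element of \<open>posi {g\<^sub>i}\<close> dominated by a
  member of B. Applying K_Add to these combinations and then K_Dom, K_0 and K_\<supseteq> lands in B.
  Conversely, each axiom of K follows from a closure property of coherent sets; for K_Add, a
  coherent D containing some \<open>g\<^sub>i\<close> of each \<open>A\<^sub>i\<close> contains \<open>posi {g\<^sub>i}\<close>.
\<close>

lemma zero_gamble: "(\<lambda>x. 0) \<in> gambles"
  unfolding gambles_def by auto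

lemma gambles_add:
  assumes "f \<in> gambles" "g \<in> gambles"
  shows "(\<lambda>x. f x + g x) \<in> gambles"
proof -
  obtain a b where a: "\<forall>x. \<bar>f x\<bar> \<le> a" and b: "\<forall>x. \<bar>g x\<bar> \<le> b"
    using assms unfolding gambles_def by blast
  have "\<bar>f x + g x\<bar> \<le> a + b" for x
    using abs_triangle_ineq[of "f x" "g x"] a[rule_format, of x] b[rule_format, of x] by linarith
  then show ?thesis unfolding gambles_def by blast
qed

lemma gambles_scale:
  assumes "f \<in> gambles"
  shows "(\<lambda>x. t * f x) \<in> gambles"
proof -
  obtain a where "\<forall>x. \<bar>f x\<bar> \<le> a" using assms unfolding gambles_def by blast
  then have "\<forall>x. \<bar>t * f x\<bar> \<le> \<bar>t\<bar> * a" by (simp add: abs_mult mult_left_mono)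
  then show ?thesis unfolding gambles_def by blast
qed

lemma gambles_diff: "f \<in> gambles \<Longrightarrow> g \<in> gambles \<Longrightarrow> (\<lambda>x. f x - g x) \<in> gambles"
  using gambles_add[of f "\<lambda>x. -1 * g x"] gambles_scale[of g "-1"] by simp

lemma gambles_lincomb: "\<forall>i<(m::nat). h i \<in> gambles \<Longrightarrow> (\<lambda>x. \<Sum>i<m. l i * h i x) \<in> gambles"
  by (induction m) (simp_all add: zero_gamble gambles_add gambles_scale)

lemma pos_gambles_nonneg: "p \<in> pos_gambles \<Longrightarrow> p x \<ge> 0"
  unfolding pos_gambles_def by blast

lemma pos_gambles_add:
  assumes "p \<in> pos_gambles" "q \<in> pos_gambles"
  shows "(\<lambda>x. p x + q x) \<in> pos_gambles"
proof -
  obtain x where "p x \<noteq> 0" using assms(1) unfolding pos_gambles_def by auto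
  then have "p x + q x \<noteq> 0"
    using pos_gambles_nonneg[OF assms(1), of x] pos_gambles_nonneg[OF assms(2), of x] by linarith
  then show ?thesis
    using assms gambles_add unfolding pos_gambles_def by (auto simp: fun_eq_iff)
qed

lemma pos_gambles_scale:
  assumes "p \<in> pos_gambles" "t > 0"
  shows "(\<lambda>x. t * p x) \<in> pos_gambles"
  using assms gambles_scale unfolding pos_gambles_def by (auto simp: fun_eq_iff)

lemma posiI:
  assumes "(m::nat) \<ge> 1" "\<forall>i<m. l i > (0::real) \<and> h i \<in> S" "g = (\<lambda>x. \<Sum>i<m. l i * h i x)"
  shows "g \<in> posi S"
  using assms unfolding posi_def by blast

lemma posiE:
  assumes "g \<in> posi S"
  obtains m l h where "(m::nat) \<ge> 1" "\<forall>i<m. l i > (0::real) \<and> h i \<in> S"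
    "g = (\<lambda>x. \<Sum>i<m. l i * h i x)"
  using assms unfolding posi_def by blast

lemma posi_subset_gambles: "S \<subseteq> gambles \<Longrightarrow> posi S \<subseteq> gambles"
  by (auto elim!: posiE intro!: gambles_lincomb)

lemma posi_mem: "h \<in> S \<Longrightarrow> h \<in> posi S"
  by (rule posiI[of 1 "\<lambda>_. 1" "\<lambda>_. h"]) auto

lemma sum_lessThan_add: "(\<Sum>i<m + n. f i) = (\<Sum>i<m. f i) + (\<Sum>i<n. f (m + i))"
  for f :: "nat \<Rightarrow> 'b::comm_monoid_add"
  by (induction n) (simp_all add: add.assoc)

lemma posi_add:
  assumes "c \<in> posi S" "d \<in> posi S"
  shows "(\<lambda>x. c x + d x) \<in> posi S"
proof -
  obtain m1 l1 h1 where 1: "(m1::nat) \<ge> 1" "\<forall>i<m1. l1 i > (0::real) \<and> h1 i \<in> S"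
    "c = (\<lambda>x. \<Sum>i<m1. l1 i * h1 i x)"
    using assms(1) by (rule posiE)
  obtain m2 l2 h2 where 2: "(m2::nat) \<ge> 1" "\<forall>i<m2. l2 i > (0::real) \<and> h2 i \<in> S"
    "d = (\<lambda>x. \<Sum>i<m2. l2 i * h2 i x)"
    using assms(2) by (rule posiE)
  define l where "l i = (if i < m1 then l1 i else l2 (i - m1))" for i
  define h where "h i = (if i < m1 then h1 i else h2 (i - m1))" for i
  have "(\<lambda>x. c x + d x) = (\<lambda>x. \<Sum>i<m1 + m2. l i * h i x)"
    by (simp add: 1(3) 2(3) sum_lessThan_add l_def h_def)
  moreover have "\<forall>i<m1 + m2. l i > 0 \<and> h i \<in> S"
    using 1(2) 2(2) by (auto simp: l_def h_def)
  ultimately show ?thesis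
    using 1(1) by (intro posiI) auto
qed

lemma posi_scale:
  assumes "c \<in> posi S" "t > 0"
  shows "(\<lambda>x. t * c x) \<in> posi S"
proof -
  obtain m l h where "(m::nat) \<ge> 1" "\<forall>i<m. l i > (0::real) \<and> h i \<in> S" "c = (\<lambda>x. \<Sum>i<m. l i * h i x)"
    using assms(1) by (rule posiE)
  with assms(2) show ?thesis
    by (intro posiI[of m "\<lambda>i. t * l i" h]) (auto simp: sum_distrib_left mult.assoc)
qed

lemma coherent_D_subset_gambles: "coherent_D D \<Longrightarrow> D \<subseteq> gambles"
  unfolding coherent_D_def by blast

lemma coherent_D_zero_notin: "coherent_D D \<Longrightarrow> (\<lambda>x. 0) \<notin> D"
  unfolding coherent_D_def by blast

lemma coherent_D_pos_gambles: "coherent_D D \<Longrightarrow> pos_gambles \<subseteq> D"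
  unfolding coherent_D_def by blast

lemma coherent_D_scale: "coherent_D D \<Longrightarrow> g \<in> D \<Longrightarrow> t > 0 \<Longrightarrow> (\<lambda>x. t * g x) \<in> D"
  unfolding coherent_D_def by blast

lemma coherent_D_add: "coherent_D D \<Longrightarrow> f \<in> D \<Longrightarrow> g \<in> D \<Longrightarrow> (\<lambda>x. f x + g x) \<in> D"
  unfolding coherent_D_def by blast

lemma coherent_D_lincomb:
  assumes "coherent_D D" "(m::nat) \<ge> 1" "\<forall>i<m. l i > 0 \<and> h i \<in> D"
  shows "(\<lambda>x. \<Sum>i<m. l i * h i x) \<in> D"
  using assms(2,3)
proof (induction m)
  case (Suc m)
  then show ?case
    by (cases "m = 0") (simp_all add: coherent_D_add[OF assms(1)] coherent_D_scale[OF assms(1)])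
qed simp

lemma posi_subset_coherent_D: "coherent_D D \<Longrightarrow> S \<subseteq> D \<Longrightarrow> posi S \<subseteq> D"
  by (force elim!: posiE intro: coherent_D_lincomb)

lemma coherent_D_upward_closed:
  assumes D: "coherent_D D" and "g \<in> D" "f \<in> gambles" "\<forall>x. g x \<le> f x"
  shows "f \<in> D"
proof (cases "f = g")
  case False
  have "(\<lambda>x. f x - g x) \<in> pos_gambles"
    using assms False coherent_D_subset_gambles[OF D] gambles_diff
    unfolding pos_gambles_def by (auto simp: fun_eq_iff)
  then have "(\<lambda>x. g x + (f x - g x)) \<in> D"
    using coherent_D_add[OF D \<open>g \<in> D\<close>] coherent_D_pos_gambles[OF D] by blast
  then show ?thesis by simp
qed (use assms in simp)

definition natural_extension :: "('a \<Rightarrow> real) set \<Rightarrow> ('a \<Rightarrow> real) set" where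
  "natural_extension S = pos_gambles \<union> {h \<in> gambles. \<exists>c\<in>posi S. \<forall>x. c x \<le> h x}"

lemma natural_extension_lower_bound:
  "h \<in> natural_extension S \<Longrightarrow> h \<notin> pos_gambles \<Longrightarrow> \<exists>c\<in>posi S. \<forall>x. c x \<le> h x"
  unfolding natural_extension_def by blast

lemma natural_extensionI:
  "h \<in> gambles \<Longrightarrow> c \<in> posi S \<Longrightarrow> \<forall>x. c x \<le> h x \<Longrightarrow> h \<in> natural_extension S"
  unfolding natural_extension_def by blast

lemma subset_natural_extension: "S \<subseteq> gambles \<Longrightarrow> S \<subseteq> natural_extension S"
  unfolding natural_extension_def using posi_mem by fastforce

lemma natural_extension_add:
  assumes f: "f \<in> natural_extension S" and g: "g \<in> natural_extension S"
  shows "(\<lambda>x. f x + g x) \<in> natural_extension S"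
proof -
  have fg: "(\<lambda>x. f x + g x) \<in> gambles"
    using f g gambles_add unfolding natural_extension_def pos_gambles_def by blast
  have lower: "\<exists>c\<in>posi S. \<forall>x. c x \<le> h x + k x"
    if h: "h \<in> natural_extension S" "h \<notin> pos_gambles" and k: "k \<in> natural_extension S" for h k
  proof -
    obtain c where c: "c \<in> posi S" "\<forall>x. c x \<le> h x"
      using natural_extension_lower_bound[OF h] by blast
    show ?thesis
    proof (cases "k \<in> pos_gambles")
      case True
      then have "\<forall>x. c x \<le> h x + k x" using c(2) pos_gambles_nonneg by (smt (verit))
      then show ?thesis using c(1) by blast
    next
      case False
      then obtain d where d: "d \<in> posi S" "\<forall>x. d x \<le> k x"
        using natural_extension_lower_bound[OF k] by blast
      show ?thesis
        by (rule bexI[of _ "\<lambda>x. c x + d x"]) (use c d posi_add in \<open>auto intro: add_mono\<close>)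
    qed
  qed
  consider "f \<in> pos_gambles" "g \<in> pos_gambles" | "f \<notin> pos_gambles" | "g \<notin> pos_gambles"
    by blast
  then show ?thesis
  proof cases
    case 1
    then show ?thesis using pos_gambles_add unfolding natural_extension_def by blast
  next
    case 2
    then show ?thesis using lower[OF f _ g] fg natural_extensionI by blast
  next
    case 3
    then have "\<exists>c\<in>posi S. \<forall>x. c x \<le> f x + g x" using lower[OF g _ f] by (simp add: add.commute)
    then show ?thesis using fg natural_extensionI by blast
  qed
qed

lemma natural_extension_scale:
  assumes g: "g \<in> natural_extension S" and t: "t > 0"
  shows "(\<lambda>x. t * g x) \<in> natural_extension S"
proof (cases "g \<in> pos_gambles")
  case True
  then show ?thesis using pos_gambles_scale[OF _ t] unfolding natural_extension_def by blast
next
  case False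
  then obtain c where c: "c \<in> posi S" "\<forall>x. c x \<le> g x"
    using natural_extension_lower_bound[OF g] by blast
  have "g \<in> gambles" using g unfolding natural_extension_def pos_gambles_def by blast
  moreover have "(\<lambda>x. t * c x) \<in> posi S" using posi_scale[OF c(1) t] .
  moreover have "\<forall>x. t * c x \<le> t * g x" using c(2) t by simp
  ultimately show ?thesis
    by (intro natural_extensionI[of _ "\<lambda>x. t * c x"] gambles_scale)
qed

lemma natural_extension_coherent:
  assumes "S \<subseteq> gambles" "\<not> (\<exists>c\<in>posi S. \<forall>x. c x \<le> 0)"
  shows "coherent_D (natural_extension S)"
  unfolding coherent_D_def
proof (intro conjI ballI allI impI)
  show "natural_extension S \<subseteq> gambles" "pos_gambles \<subseteq> natural_extension S"
    unfolding natural_extension_def pos_gambles_def by auto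
  show "(\<lambda>x. 0) \<notin> natural_extension S"
    using assms(2) unfolding natural_extension_def pos_gambles_def by auto
qed (simp_all add: natural_extension_add natural_extension_scale)

lemma ex_posi_nonpos_or_below:
  assumes "S \<subseteq> gambles" "B \<inter> pos_gambles = {}"
    and "\<forall>D\<in>coherent_sets. S \<subseteq> D \<longrightarrow> B \<inter> D \<noteq> {}"
  shows "\<exists>c\<in>posi S. (\<forall>x. c x \<le> 0) \<or> (\<exists>b\<in>B. \<forall>x. c x \<le> b x)"
proof (cases "\<exists>c\<in>posi S. \<forall>x. c x \<le> 0")
  case False
  then have "natural_extension S \<in> coherent_sets"
    using natural_extension_coherent[OF assms(1)] unfolding coherent_sets_def by blast
  then obtain b where "b \<in> B" "b \<in> natural_extension S"
    using assms(3) subset_natural_extension[OF assms(1)] by blast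
  then show ?thesis
    using assms(2) natural_extension_lower_bound by blast
qed blast

lemma coherent_K_empty_notin: "coherent_K K \<Longrightarrow> {} \<notin> K"
  unfolding coherent_K_def by (elim conjE)

lemma coherent_K_remove_zero: "coherent_K K \<Longrightarrow> A \<in> K \<Longrightarrow> A - {\<lambda>x. 0} \<in> K"
  unfolding coherent_K_def by (elim conjE) (erule bspec)

lemma coherent_K_pos_singleton: "coherent_K K \<Longrightarrow> g \<in> pos_gambles \<Longrightarrow> {g} \<in> K"
  unfolding coherent_K_def by (elim conjE) (erule bspec)

lemma coherent_K_superset: "coherent_K K \<Longrightarrow> A \<in> K \<Longrightarrow> A \<subseteq> B \<Longrightarrow> B \<subseteq> gambles \<Longrightarrow> B \<in> K"
  unfolding coherent_K_def by (elim conjE) simp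

lemma coherent_K_dominate:
  "coherent_K K \<Longrightarrow> A \<in> K \<Longrightarrow> \<forall>g\<in>A. f g \<in> gambles \<and> (\<forall>x. f g x \<ge> g x) \<Longrightarrow> f ` A \<in> K"
  unfolding coherent_K_def by (elim conjE) simp

lemma coherent_K_posi_combine:
  "coherent_K K \<Longrightarrow> \<forall>i<(n::nat). A i \<in> K \<Longrightarrow> \<forall>g\<in>PiE {..<n} A. f g \<in> posi (g ` {..<n})
    \<Longrightarrow> f ` PiE {..<n} A \<in> K"
  unfolding coherent_K_def by (elim conjE) simp

lemma coherent_K_mem_if_dominated:
  assumes K: "coherent_K K" and "A \<in> K" "B \<subseteq> gambles"
    and dom: "\<forall>a\<in>A. (\<forall>x. a x \<le> 0) \<or> (\<exists>b\<in>B. \<forall>x. a x \<le> b x)"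
  shows "B \<in> K"
proof -
  define up where "up a = (if \<exists>b\<in>B. \<forall>x. a x \<le> b x then SOME b. b \<in> B \<and> (\<forall>x. a x \<le> b x)
    else (\<lambda>x. 0))" for a :: "'a \<Rightarrow> real"
  have up: "up a \<in> gambles \<and> (\<forall>x. up a x \<ge> a x) \<and> (up a = (\<lambda>x. 0) \<or> up a \<in> B)"
    if "a \<in> A" for a
  proof (cases "\<exists>b\<in>B. \<forall>x. a x \<le> b x")
    case True
    then have ex: "\<exists>b. b \<in> B \<and> (\<forall>x. a x \<le> b x)" by blast
    have "up a \<in> B \<and> (\<forall>x. a x \<le> up a x)"
      using someI_ex[OF ex] True unfolding up_def by simp
    then show ?thesis using assms(3) by blast
  next
    case False
    then have "\<forall>x. a x \<le> 0" using dom that by blast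
    then show ?thesis using False zero_gamble unfolding up_def by auto
  qed
  have "up ` A - {\<lambda>x. 0} \<in> K"
    using up by (intro coherent_K_remove_zero[OF K] coherent_K_dominate[OF K \<open>A \<in> K\<close>]) blast
  moreover have "up ` A - {\<lambda>x. 0} \<subseteq> B"
    using up by blast
  ultimately show ?thesis
    using coherent_K_superset[OF K _ _ assms(3)] by blast
qed

lemma coherent_K_consequence:
  assumes K: "coherent_K K" "K \<subseteq> Pow gambles" and A: "\<forall>i<(n::nat). A i \<in> K"
    and B: "B \<subseteq> gambles"
    and entails: "\<forall>D\<in>coherent_sets. (\<forall>i<n. A i \<inter> D \<noteq> {}) \<longrightarrow> B \<inter> D \<noteq> {}"
  shows "B \<in> K"
proof (cases "B \<inter> pos_gambles = {}")
  case False
  then obtain b where "b \<in> B" "b \<in> pos_gambles" by blast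
  then show ?thesis using coherent_K_pos_singleton[OF K(1)] coherent_K_superset[OF K(1) _ _ B] by blast
next
  case True
  have "\<exists>c\<in>posi (g ` {..<n}). (\<forall>x. c x \<le> 0) \<or> (\<exists>b\<in>B. \<forall>x. c x \<le> b x)"
    if g: "g \<in> PiE {..<n} A" for g
  proof (rule ex_posi_nonpos_or_below[OF _ True])
    have gA: "g i \<in> A i" if "i < n" for i using PiE_mem[OF g] that by simp
    then show "g ` {..<n} \<subseteq> gambles" using A K(2) by blast
    show "\<forall>D\<in>coherent_sets. g ` {..<n} \<subseteq> D \<longrightarrow> B \<inter> D \<noteq> {}"
    proof (intro ballI impI)
      fix D assume "D \<in> coherent_sets" "g ` {..<n} \<subseteq> D"
      moreover from this(2) have "\<forall>i<n. A i \<inter> D \<noteq> {}" using gA by blast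
      ultimately show "B \<inter> D \<noteq> {}" using entails by blast
    qed
  qed
  then obtain f where f: "\<And>g. g \<in> PiE {..<n} A \<Longrightarrow> f g \<in> posi (g ` {..<n})
      \<and> ((\<forall>x. f g x \<le> 0) \<or> (\<exists>b\<in>B. \<forall>x. f g x \<le> b x))"
    using bchoice[of "PiE {..<n} A"] by (metis (lifting))
  have "f ` PiE {..<n} A \<in> K"
    using f by (intro coherent_K_posi_combine[OF K(1) A]) blast
  moreover have "\<forall>a\<in>f ` PiE {..<n} A. (\<forall>x. a x \<le> 0) \<or> (\<exists>b\<in>B. \<forall>x. a x \<le> b x)"
    using f by blast
  ultimately show ?thesis
    by (rule coherent_K_mem_if_dominated[OF K(1) _ B])
qed

lemma proper_filter_on_subset: "proper_filter_on F C \<Longrightarrow> DD \<in> F \<Longrightarrow> DD \<subseteq> C"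
  unfolding proper_filter_on_def by blast

lemma proper_filter_on_mono:
  "proper_filter_on F C \<Longrightarrow> D1 \<in> F \<Longrightarrow> D1 \<subseteq> D2 \<Longrightarrow> D2 \<subseteq> C \<Longrightarrow> D2 \<in> F"
  unfolding proper_filter_on_def by blast

lemma proper_filter_on_empty_notin: "proper_filter_on F C \<Longrightarrow> {} \<notin> F"
  unfolding proper_filter_on_def by blast

lemma proper_filter_on_top:
  assumes F: "proper_filter_on F C"
  shows "C \<in> F"
proof -
  have "F \<noteq> {}" using F unfolding proper_filter_on_def by blast
  then obtain D where "D \<in> F" by blast
  then show ?thesis using proper_filter_on_mono[OF F _ proper_filter_on_subset[OF F]] by simp
qed

lemma proper_filter_on_INT:
  assumes F: "proper_filter_on F C" and "\<forall>i<(n::nat). DD i \<in> F"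
  shows "C \<inter> (\<Inter>i<n. DD i) \<in> F"
  using assms(2)
proof (induction n)
  case 0
  then show ?case using proper_filter_on_top[OF F] by simp
next
  case (Suc n)
  have "C \<inter> (\<Inter>i<Suc n. DD i) = (C \<inter> (\<Inter>i<n. DD i)) \<inter> DD n"
    by (auto simp: lessThan_Suc)
  moreover have "DD n \<in> F" using Suc.prems by simp
  ultimately show ?case using Suc F unfolding proper_filter_on_def by simp
qed

lemma proper_filter_on_ex_iff_mem:
  assumes "proper_filter_on F C"
  shows "(\<exists>DD\<in>F. \<forall>D\<in>DD. P D) \<longleftrightarrow> {D \<in> C. P D} \<in> F"
proof
  assume "\<exists>DD\<in>F. \<forall>D\<in>DD. P D"
  then obtain DD where "DD \<in> F" "\<forall>D\<in>DD. P D" by blast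
  show "{D \<in> C. P D} \<in> F"
  proof (rule proper_filter_on_mono[OF assms \<open>DD \<in> F\<close>])
    show "DD \<subseteq> {D \<in> C. P D}"
      using \<open>\<forall>D\<in>DD. P D\<close> proper_filter_on_subset[OF assms \<open>DD \<in> F\<close>] by blast
  qed blast
next
  assume "{D \<in> C. P D} \<in> F"
  then show "\<exists>DD\<in>F. \<forall>D\<in>DD. P D" by (rule bexI[rotated]) simp
qed

definition coherent_sets_meeting :: "('a \<Rightarrow> real) set \<Rightarrow> ('a \<Rightarrow> real) set set" where
  "coherent_sets_meeting B = {D \<in> coherent_sets. B \<inter> D \<noteq> {}}"

text \<open>The intersection with \<open>coherent_sets\<close> matters only for \<open>n = 0\<close>, where the empty
  intersection is \<open>UNIV\<close>.\<close>
definition consequence_filter :: "('a \<Rightarrow> real) set set \<Rightarrow> ('a \<Rightarrow> real) set set set" where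
  "consequence_filter K = {DD. DD \<subseteq> coherent_sets \<and> (\<exists>(n::nat) A. (\<forall>i<n. A i \<in> K)
     \<and> coherent_sets \<inter> (\<Inter>i<n. coherent_sets_meeting (A i)) \<subseteq> DD)}"

lemma consequence_filterI:
  "DD \<subseteq> coherent_sets \<Longrightarrow> \<forall>i<(n::nat). A i \<in> K
    \<Longrightarrow> coherent_sets \<inter> (\<Inter>i<n. coherent_sets_meeting (A i)) \<subseteq> DD \<Longrightarrow> DD \<in> consequence_filter K"
  unfolding consequence_filter_def by blast

lemma consequence_filterE:
  assumes "DD \<in> consequence_filter K"
  obtains n A where "DD \<subseteq> coherent_sets" "\<forall>i<(n::nat). A i \<in> K"
    "coherent_sets \<inter> (\<Inter>i<n. coherent_sets_meeting (A i)) \<subseteq> DD"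
  using assms unfolding consequence_filter_def by blast

lemma proper_filter_consequence_filter:
  assumes K: "coherent_K K" "K \<subseteq> Pow gambles"
  shows "proper_filter_on (consequence_filter K) coherent_sets"
  unfolding proper_filter_on_def
proof (intro conjI ballI allI impI)
  show "consequence_filter K \<subseteq> Pow coherent_sets"
    by (auto simp: consequence_filter_def)
  have "coherent_sets \<in> consequence_filter K"
    by (rule consequence_filterI[of _ 0]) auto
  then show "consequence_filter K \<noteq> {}" by blast
  show "{} \<notin> consequence_filter K"
  proof
    assume "{} \<in> consequence_filter K"
    then obtain n A where "\<forall>i<(n::nat). A i \<in> K"
      "coherent_sets \<inter> (\<Inter>i<n. coherent_sets_meeting (A i)) \<subseteq> {}"
      by (rule consequence_filterE) (rule that)
    then have "{} \<in> K"
      by (intro coherent_K_consequence[OF K, of n A]) (auto simp: coherent_sets_meeting_def)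
    then show False using coherent_K_empty_notin[OF K(1)] by blast
  qed
next
  fix D1 D2 assume "D1 \<in> consequence_filter K" "D2 \<in> consequence_filter K"
  obtain n1 A1 where 1: "D1 \<subseteq> coherent_sets" "\<forall>i<(n1::nat). A1 i \<in> K"
      "coherent_sets \<inter> (\<Inter>i<n1. coherent_sets_meeting (A1 i)) \<subseteq> D1"
    using \<open>D1 \<in> consequence_filter K\<close> by (rule consequence_filterE)
  obtain n2 A2 where 2: "D2 \<subseteq> coherent_sets" "\<forall>i<(n2::nat). A2 i \<in> K"
      "coherent_sets \<inter> (\<Inter>i<n2. coherent_sets_meeting (A2 i)) \<subseteq> D2"
    using \<open>D2 \<in> consequence_filter K\<close> by (rule consequence_filterE)
  define A where "A i = (if i < n1 then A1 i else A2 (i - n1))" for i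
  have "\<forall>i<n1 + n2. A i \<in> K" using 1(2) 2(2) by (simp add: A_def)
  moreover have "coherent_sets \<inter> (\<Inter>i<n1 + n2. coherent_sets_meeting (A i)) \<subseteq> D1 \<inter> D2"
  proof -
    have "(\<Inter>i<n1 + n2. coherent_sets_meeting (A i))
        \<subseteq> (\<Inter>i<n1. coherent_sets_meeting (A1 i)) \<inter> (\<Inter>i<n2. coherent_sets_meeting (A2 i))"
    proof (intro subsetI IntI INT_I)
      fix D i assume D: "D \<in> (\<Inter>i<n1 + n2. coherent_sets_meeting (A i))"
      show "D \<in> coherent_sets_meeting (A1 i)" if "i \<in> {..<n1}"
        using D[THEN INT_D, of i] that by (simp add: A_def)
      show "D \<in> coherent_sets_meeting (A2 i)" if "i \<in> {..<n2}"
        using D[THEN INT_D, of "n1 + i"] that by (simp add: A_def)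
    qed
    then show ?thesis using 1(3) 2(3) by (meson inf_mono le_inf_iff order_trans order_refl)
  qed
  ultimately show "D1 \<inter> D2 \<in> consequence_filter K"
    using 1(1) by (intro consequence_filterI[of _ "n1 + n2" A]) auto
next
  fix D1 D2 assume D1: "D1 \<in> consequence_filter K" and D2: "D1 \<subseteq> D2 \<and> D2 \<subseteq> coherent_sets"
  obtain n A where "\<forall>i<(n::nat). A i \<in> K"
      "coherent_sets \<inter> (\<Inter>i<n. coherent_sets_meeting (A i)) \<subseteq> D1"
    using D1 by (rule consequence_filterE) (rule that)
  then show "D2 \<in> consequence_filter K"
    using D2 by (intro consequence_filterI[of _ n A]) auto
qed

lemma represents_consequence_filter:
  assumes K: "coherent_K K" "K \<subseteq> Pow gambles"
  shows "represents K (consequence_filter K)"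
  unfolding represents_def
proof (intro allI impI iffI)
  fix B assume "B \<subseteq> gambles" "B \<in> K"
  then have "coherent_sets_meeting B \<in> consequence_filter K"
    by (intro consequence_filterI[of _ 1 "\<lambda>_. B"]) (auto simp: coherent_sets_meeting_def)
  then show "\<exists>DD\<in>consequence_filter K. \<forall>D\<in>DD. B \<inter> D \<noteq> {}"
    by (rule bexI[rotated]) (simp add: coherent_sets_meeting_def)
next
  fix B assume B: "B \<subseteq> gambles" and "\<exists>DD\<in>consequence_filter K. \<forall>D\<in>DD. B \<inter> D \<noteq> {}"
  then obtain DD n A where "\<forall>D\<in>DD. B \<inter> D \<noteq> {}" "\<forall>i<(n::nat). A i \<in> K"
      "coherent_sets \<inter> (\<Inter>i<n. coherent_sets_meeting (A i)) \<subseteq> DD"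
    by (elim bexE consequence_filterE) blast
  then show "B \<in> K"
    by (intro coherent_K_consequence[OF K, of n A] B) (auto simp: coherent_sets_meeting_def)
qed

lemma represents_iff_meeting_mem:
  assumes "proper_filter_on F coherent_sets" "represents K F" "B \<subseteq> gambles"
  shows "B \<in> K \<longleftrightarrow> coherent_sets_meeting B \<in> F"
proof -
  have "B \<in> K \<longleftrightarrow> (\<exists>DD\<in>F. \<forall>D\<in>DD. B \<inter> D \<noteq> {})"
    using assms(2,3) unfolding represents_def by blast
  also have "\<dots> \<longleftrightarrow> {D \<in> coherent_sets. B \<inter> D \<noteq> {}} \<in> F"
    by (rule proper_filter_on_ex_iff_mem[OF assms(1)])
  finally show ?thesis unfolding coherent_sets_meeting_def .
qed

lemma coherent_D_meets_posi_choice: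
  assumes D: "coherent_D D" and meets: "\<forall>i<(n::nat). A i \<inter> D \<noteq> {}"
    and f: "\<forall>g\<in>PiE {..<n} A. f g \<in> posi (g ` {..<n})"
  shows "f ` PiE {..<n} A \<inter> D \<noteq> {}"
proof -
  have "\<forall>i<n. \<exists>x. x \<in> A i \<inter> D" using meets by blast
  then obtain sel where sel: "\<forall>i<n. sel i \<in> A i \<inter> D" by metis
  define g where "g = restrict sel {..<n}"
  have "g \<in> PiE {..<n} A" "g ` {..<n} \<subseteq> D"
    using sel unfolding g_def by auto
  moreover from this have "f g \<in> D"
    using f posi_subset_coherent_D[OF D] by blast
  ultimately show ?thesis by blast
qed

lemma coherent_K_if_represents:
  assumes K: "K \<subseteq> Pow gambles" and F: "proper_filter_on F coherent_sets"
    and R: "represents K F"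
  shows "coherent_K K"
proof -
  note mem = represents_iff_meeting_mem[OF F R]
  have grow: "B \<in> K"
    if "A \<in> K" "B \<subseteq> gambles" "coherent_sets_meeting A \<subseteq> coherent_sets_meeting B" for A B
  proof -
    have "coherent_sets_meeting A \<in> F" using that(1) K mem by blast
    then have "coherent_sets_meeting B \<in> F"
      using proper_filter_on_mono[OF F _ that(3)] unfolding coherent_sets_meeting_def by blast
    then show ?thesis using mem[OF that(2)] by blast
  qed
  have coherent: "coherent_D D" if "D \<in> coherent_sets" for D
    using that unfolding coherent_sets_def by simp
  show ?thesis
    unfolding coherent_K_def
  proof (intro conjI ballI allI impI)
    show "{} \<notin> K"
      using mem[of "{}"] proper_filter_on_empty_notin[OF F] by (simp add: coherent_sets_meeting_def)
  next
    fix g :: "'a \<Rightarrow> real" assume "g \<in> pos_gambles"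
    then have "coherent_sets_meeting {g} = coherent_sets" and "{g} \<subseteq> gambles"
      using coherent coherent_D_pos_gambles unfolding coherent_sets_meeting_def pos_gambles_def
      by auto
    then show "{g} \<in> K" using mem proper_filter_on_top[OF F] by simp
  next
    fix A assume "A \<in> K"
    have "coherent_sets_meeting A \<subseteq> coherent_sets_meeting (A - {\<lambda>x. 0})"
      using coherent coherent_D_zero_notin unfolding coherent_sets_meeting_def by blast
    then show "A - {\<lambda>x. 0} \<in> K"
      using \<open>A \<in> K\<close> K by (intro grow[OF \<open>A \<in> K\<close>]) auto
  next
    fix A B assume "A \<in> K" "A \<subseteq> B \<and> B \<subseteq> gambles"
    then show "B \<in> K"
      by (intro grow[OF \<open>A \<in> K\<close>]) (auto simp: coherent_sets_meeting_def)
  next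
    fix A f assume "A \<in> K" and f: "\<forall>g\<in>A. f g \<in> gambles \<and> (\<forall>x. g x \<le> f g x)"
    have "coherent_sets_meeting A \<subseteq> coherent_sets_meeting (f ` A)"
    proof
      fix D assume "D \<in> coherent_sets_meeting A"
      then obtain g where D: "D \<in> coherent_sets" and g: "g \<in> A" "g \<in> D"
        unfolding coherent_sets_meeting_def by blast
      then have "f g \<in> D" using f coherent_D_upward_closed[OF coherent[OF D] g(2)] by blast
      then show "D \<in> coherent_sets_meeting (f ` A)"
        using D g(1) unfolding coherent_sets_meeting_def by blast
    qed
    moreover have "f ` A \<subseteq> gambles" using f by blast
    ultimately show "f ` A \<in> K" using grow[OF \<open>A \<in> K\<close>] by blast
  next
    fix n :: nat and A :: "nat \<Rightarrow> ('a \<Rightarrow> real) set" and f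
    assume "(\<forall>i<n. A i \<in> K) \<and> (\<forall>g\<in>PiE {..<n} A. f g \<in> posi (g ` {..<n}))"
    then have A: "\<forall>i<n. A i \<in> K" and f: "\<forall>g\<in>PiE {..<n} A. f g \<in> posi (g ` {..<n})"
      by blast+
    have "\<forall>i<n. coherent_sets_meeting (A i) \<in> F"
    proof (intro allI impI)
      fix i assume "i < n"
      then have "A i \<in> K" using A by blast
      then show "coherent_sets_meeting (A i) \<in> F" using mem[of "A i"] K by blast
    qed
    then have E: "coherent_sets \<inter> (\<Inter>i<n. coherent_sets_meeting (A i)) \<in> F"
      by (rule proper_filter_on_INT[OF F])
    have "coherent_sets \<inter> (\<Inter>i<n. coherent_sets_meeting (A i))
        \<subseteq> coherent_sets_meeting (f ` PiE {..<n} A)"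
    proof
      fix D assume "D \<in> coherent_sets \<inter> (\<Inter>i<n. coherent_sets_meeting (A i))"
      then have "D \<in> coherent_sets" "\<forall>i<n. A i \<inter> D \<noteq> {}"
        unfolding coherent_sets_meeting_def by auto
      then show "D \<in> coherent_sets_meeting (f ` PiE {..<n} A)"
        using coherent_D_meets_posi_choice[OF coherent _ f] unfolding coherent_sets_meeting_def by blast
    qed
    then have "coherent_sets_meeting (f ` PiE {..<n} A) \<in> F"
      using proper_filter_on_mono[OF F E] unfolding coherent_sets_meeting_def by blast
    moreover have "f ` PiE {..<n} A \<subseteq> gambles"
    proof
      fix c assume "c \<in> f ` PiE {..<n} A"
      then obtain g where g: "g \<in> PiE {..<n} A" and c: "c = f g" by blast
      have "g i \<in> A i" if "i < n" for i using PiE_mem[OF g] that by simp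
      then have "g ` {..<n} \<subseteq> gambles" using A K by blast
      then show "c \<in> gambles" using f g c posi_subset_gambles by blast
    qed
    ultimately show "f ` PiE {..<n} A \<in> K" using mem by blast
  qed
qed

theorem mainTheorem11:
  fixes K :: "('a \<Rightarrow> real) set set"
  assumes "K \<subseteq> Pow gambles"
  shows "(coherent_K K \<longleftrightarrow>
           (\<exists>F. proper_filter_on F coherent_sets \<and> represents K F))
       \<and> (\<forall>F. proper_filter_on F coherent_sets \<and> represents K F \<longrightarrow>
           (\<forall>B. B \<subseteq> gambles \<longrightarrow>
              ((\<exists>DD\<in>F. \<forall>D\<in>DD. B \<inter> D \<noteq> {}) \<longleftrightarrow>
               {D \<in> coherent_sets. B \<inter> D \<noteq> {}} \<in> F)))"
proof (intro conjI allI impI)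
  show "coherent_K K \<longleftrightarrow> (\<exists>F. proper_filter_on F coherent_sets \<and> represents K F)"
  proof
    assume K: "coherent_K K"
    show "\<exists>F. proper_filter_on F coherent_sets \<and> represents K F"
      using proper_filter_consequence_filter[OF K assms] represents_consequence_filter[OF K assms]
      by blast
  next
    assume "\<exists>F. proper_filter_on F coherent_sets \<and> represents K F"
    then show "coherent_K K" using coherent_K_if_represents[OF assms] by blast
  qed
next
  fix F B assume "proper_filter_on F coherent_sets \<and> represents K F"
  then show "(\<exists>DD\<in>F. \<forall>D\<in>DD. B \<inter> D \<noteq> {}) \<longleftrightarrow> {D \<in> coherent_sets. B \<inter> D \<noteq> {}} \<in> F"
    using proper_filter_on_ex_iff_mem[of F coherent_sets "\<lambda>D. B \<inter> D \<noteq> {}"] by blast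
qed

end
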